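(* Let $n = 2k+1 > 3$ be an odd integer, $m_1 = k(2k+1)$ and $m_2 = 6k-3$. If an edge-coloring of a complete graph contains no rainbow $n$-cycle, no rainbow $m_1$-cycle and no rainbow $m_2$-cycle, then it contains no rainbow $M$-cycle for every integer $M \ge 8k^2 - 8k + 12 = 2n^2 - 13n + 23$.
   Context: A coloring is an arbitrary (not necessarily proper) assignment of colors, from an arbitrary set, to the edges of an undirected complete graph; the graph may be finite or infinite. A rainbow $n$-cycle is a cycle through $n$ distinct vertices whose $n$ edges all receive pairwise distinct colors. *)

theory Defs
  imports Main
begin

text \<open>An edge-coloring of the complete graph on the vertex type 'v is modelled as a
  symmetric function c :: 'v => 'v => 'c; the values c x x (loops) are irrelevant.\<close>

definition sym_coloring :: "('v \<Rightarrow> 'v \<Rightarrow> 'c) \<Rightarrow> bool" where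
  "sym_coloring c \<longleftrightarrow> (\<forall>x y. c x y = c y x)"

definition rainbow_cycle :: "('v \<Rightarrow> 'v \<Rightarrow> 'c) \<Rightarrow> nat \<Rightarrow> 'v list \<Rightarrow> bool" where
  "rainbow_cycle c n vs \<longleftrightarrow>
     n \<ge> 3 \<and> length vs = n \<and> distinct vs \<and>
     inj_on (\<lambda>i. c (vs ! i) (vs ! ((i + 1) mod n))) {..<n}"

definition has_rainbow_cycle :: "('v \<Rightarrow> 'v \<Rightarrow> 'c) \<Rightarrow> nat \<Rightarrow> bool" where
  "has_rainbow_cycle c n \<longleftrightarrow> (\<exists>vs. rainbow_cycle c n vs)"

end

theory Submission
  imports Defs
begin

text \<open>The chord from vertex 0 to vertex a-1 splits a rainbow (a+b-2)-cycle into an a-cycle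
  and a b-cycle sharing that chord. Its colour occurs on at most one of the two arcs, so one of
  the two smaller cycles is rainbow. Hence the s for which there is no rainbow (s+2)-cycle are
  closed under addition (and include 0, as rainbow cycles have length at least 3). For
  n = 2k+1 the excesses n-2 = 2k-1, m2-2 \<equiv> -2 and m1-2 \<equiv> -1 (mod 2k-1) generate every
  sufficiently large integer, in particular every M-2 with M \<ge> 8k^2-8k+12.\<close>

definition cycle_colors :: "('v \<Rightarrow> 'v \<Rightarrow> 'c) \<Rightarrow> 'v list \<Rightarrow> 'c list" where
  "cycle_colors c vs = map (\<lambda>i. c (vs ! i) (vs ! (Suc i mod length vs))) [0..<length vs]"

lemma length_cycle_colors [simp]: "length (cycle_colors c vs) = length vs"
  by (simp add: cycle_colors_def)

lemma nth_cycle_colors [simp]: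
  "i < length vs \<Longrightarrow> cycle_colors c vs ! i = c (vs ! i) (vs ! (Suc i mod length vs))"
  by (simp add: cycle_colors_def)

lemma rainbow_cycle_iff_distinct_colors:
  "rainbow_cycle c n vs \<longleftrightarrow>
     3 \<le> n \<and> length vs = n \<and> distinct vs \<and> distinct (cycle_colors c vs)"
  by (auto simp: rainbow_cycle_def cycle_colors_def distinct_map atLeast0LessThan)

lemma cycle_colors_take_Suc:
  assumes "n < length vs"
  shows "cycle_colors c (take (Suc n) vs) = take n (cycle_colors c vs) @ [c (vs ! n) (vs ! 0)]"
proof (rule nth_equalityI)
  fix i assume "i < length (cycle_colors c (take (Suc n) vs))"
  with assms show "cycle_colors c (take (Suc n) vs) ! i =
      (take n (cycle_colors c vs) @ [c (vs ! n) (vs ! 0)]) ! i"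
    by (cases "i = n"; cases "Suc n = length vs") (auto simp: nth_append min_def)
qed (use assms in auto)

lemma cycle_colors_Cons_drop:
  assumes "n < length vs"
  shows "cycle_colors c (vs ! 0 # drop n vs) = c (vs ! 0) (vs ! n) # drop n (cycle_colors c vs)"
proof (rule nth_equalityI)
  fix i assume i: "i < length (cycle_colors c (vs ! 0 # drop n vs))"
  show "cycle_colors c (vs ! 0 # drop n vs) ! i =
      (c (vs ! 0) (vs ! n) # drop n (cycle_colors c vs)) ! i"
  proof (cases i)
    case (Suc j)
    let ?w = "vs ! 0 # drop n vs"
    have j: "n + j < length vs" using i Suc assms by simp
    have "?w ! (Suc (Suc j) mod length ?w) = vs ! (Suc (n + j) mod length vs)"
    proof (cases "Suc (n + j) < length vs")
      case False
      with j have "Suc (Suc j) = length ?w" "Suc (n + j) = length vs" by auto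
      then show ?thesis by simp
    qed simp
    with j Suc show ?thesis by simp
  qed (use assms in auto)
qed (use assms in auto)

lemma nth_0_notin_set_drop:
  assumes "distinct vs" "0 < n"
  shows "vs ! 0 \<notin> set (drop n vs)"
  using assms by (cases vs; cases n) (auto dest: in_set_dropD)

lemma rainbow_cycle_split:
  assumes "sym_coloring c" "3 \<le> a" "3 \<le> b" "rainbow_cycle c (a + b - 2) vs"
  shows "rainbow_cycle c a (take a vs) \<or> rainbow_cycle c b (vs ! 0 # drop (a - 1) vs)"
proof -
  obtain n where a: "a = Suc n" using assms(2) by (cases a) auto
  let ?L = "cycle_colors c vs" and ?chord = "c (vs ! 0) (vs ! n)"
  have vs: "length vs = a + b - 2" "distinct vs" "distinct ?L"
    using assms(4) by (auto simp: rainbow_cycle_iff_distinct_colors)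
  have n: "n < length vs" using vs(1) a assms(3) by simp
  have "set (take n ?L) \<inter> set (drop n ?L) = {}"
    using vs(3) by (rule set_take_disj_set_drop_if_distinct) simp
  then consider "?chord \<notin> set (take n ?L)" | "?chord \<notin> set (drop n ?L)"
    by blast
  then show ?thesis
  proof cases
    case 1
    have "c (vs ! n) (vs ! 0) = ?chord"
      using assms(1) by (simp add: sym_coloring_def)
    with 1 vs n a assms(2) have "rainbow_cycle c a (take a vs)"
      by (simp add: rainbow_cycle_iff_distinct_colors cycle_colors_take_Suc)
    then show ?thesis ..
  next
    case 2
    with vs n a assms(2,3) have "rainbow_cycle c b (vs ! 0 # drop (a - 1) vs)"
      by (simp add: rainbow_cycle_iff_distinct_colors cycle_colors_Cons_drop nth_0_notin_set_drop)
    then show ?thesis ..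
  qed
qed

lemma no_rainbow_cycle_excess_add:
  assumes "sym_coloring c" "\<not> has_rainbow_cycle c (s + 2)" "\<not> has_rainbow_cycle c (t + 2)"
  shows "\<not> has_rainbow_cycle c (s + t + 2)"
proof (cases "s = 0 \<or> t = 0")
  case False
  then have "3 \<le> s + 2" "3 \<le> t + 2" by auto
  from rainbow_cycle_split[OF assms(1) this] assms(2,3) show ?thesis
    unfolding has_rainbow_cycle_def by auto
qed (use assms in auto)

lemma no_rainbow_cycle_excess_mult:
  assumes "sym_coloring c" "\<not> has_rainbow_cycle c (s + 2)"
  shows "\<not> has_rainbow_cycle c (x * s + 2)"
proof (induction x)
  case 0
  show ?case by (simp add: has_rainbow_cycle_def rainbow_cycle_def)
next
  case (Suc x)
  with no_rainbow_cycle_excess_add[OF assms] show ?case by simp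
qed

lemma nat_combination_exists:
  fixes a b c N :: nat
  assumes "0 < a" "a dvd b + 2" "a dvd c + 1" "(a - 1) div 2 * b + c \<le> N"
  shows "\<exists>x y z. N = x * a + y * b + z * c"
proof -
  \<comment> \<open>t \<equiv> -N (mod a), and t = 2y + z makes y b + z c \<equiv> -t \<equiv> N (mod a).\<close>
  define t where "t = (a - N mod a) mod a"
  define y where "y = t div 2"
  define z where "z = t mod 2"
  have "t < a" using assms(1) by (simp add: t_def)
  have "a dvd N + t"
  proof (cases "N mod a = 0")
    case False
    with assms(1) have "t = a - N mod a" by (simp add: t_def)
    moreover have "N = a * (N div a) + N mod a" by simp
    ultimately have "N + t = a * (N div a) + a"
      using mod_less_divisor[OF assms(1), of N] by arith
    then show ?thesis by simp
  qed (simp_all add: t_def dvd_eq_mod_eq_0)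
  moreover have "a dvd y * b + z * c + t"
  proof -
    have "t = 2 * y + z" by (simp add: y_def z_def)
    then have "y * b + z * c + t = y * (b + 2) + z * (c + 1)"
      by (simp add: algebra_simps)
    moreover have "a dvd y * (b + 2) + z * (c + 1)"
      using assms(2,3) by (blast intro: dvd_add dvd_mult)
    ultimately show ?thesis by (simp only:)
  qed
  moreover have "y * b + z * c \<le> N"
  proof -
    have "y \<le> (a - 1) div 2" using \<open>t < a\<close> by (simp add: y_def div_le_mono)
    moreover have "z \<le> 1" by (simp add: z_def)
    ultimately have "y * b + z * c \<le> (a - 1) div 2 * b + c"
      by (intro add_mono mult_le_mono1) (auto intro: mult_le_mono1[of z 1, simplified])
    with assms(4) show ?thesis by linarith
  qed
  ultimately have "a dvd N - (y * b + z * c)"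
    using dvd_diff_nat[of a "N + t" "y * b + z * c + t"] by simp
  then obtain x where "N - (y * b + z * c) = a * x" by (elim dvdE)
  with \<open>y * b + z * c \<le> N\<close> have "N = x * a + y * b + z * c" by (simp add: mult.commute)
  then show ?thesis by blast
qed

lemma cycle_excess_decomposition:
  fixes k M :: nat
  assumes "2 \<le> k" "8 * int k ^ 2 - 8 * int k + 12 \<le> int M"
  shows "\<exists>x y z. M = x * (2 * k - 1) + y * (6 * k - 5) + z * (k * (2 * k + 1) - 2) + 2"
proof -
  obtain j where k: "k = j + 2"
    using assms(1) le_Suc_ex[of 2 k] by (auto simp: add.commute)
  have "int (8 * j * j + 24 * j + 28) \<le> int M"
    using assms(2) k by (simp add: algebra_simps power2_eq_square)
  then have M_large: "8 * j * j + 24 * j + 28 \<le> M" by (simp only: of_nat_le_iff)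
  let ?a = "2 * k - 1" and ?b = "6 * k - 5" and ?c = "k * (2 * k + 1) - 2"
  have "?b + 2 = ?a * 3" "?c + 1 = ?a * (k + 1)"
    using k by (simp_all add: algebra_simps)
  then have "?a dvd ?b + 2" "?a dvd ?c + 1" by (metis dvd_triv_left)+
  moreover have "(?a - 1) div 2 * ?b + ?c \<le> M - 2"
    using M_large k by (simp add: algebra_simps)
  moreover have "0 < ?a" using k by simp
  ultimately obtain x y z where combination: "M - 2 = x * ?a + y * ?b + z * ?c"
    using nat_combination_exists by blast
  have "M = M - 2 + 2" using M_large by simp
  then show ?thesis unfolding combination by blast
qed

theorem lemma13:
  fixes c :: "'v \<Rightarrow> 'v \<Rightarrow> 'c" and k M :: nat
  assumes "sym_coloring c"
    and "2 * k + 1 > 3"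
    and "\<not> has_rainbow_cycle c (2 * k + 1)"
    and "\<not> has_rainbow_cycle c (k * (2 * k + 1))"
    and "\<not> has_rainbow_cycle c (6 * k - 3)"
    and "int M \<ge> 8 * int k ^ 2 - 8 * int k + 12"
  shows "\<not> has_rainbow_cycle c M"
proof -
  have k: "2 \<le> k" using assms(2) by simp
  have "2 \<le> k * (2 * k + 1)" using mult_le_mono[OF k, of 1 "2 * k + 1"] by simp
  with k have lengths:
    "2 * k - 1 + 2 = 2 * k + 1"
    "6 * k - 5 + 2 = 6 * k - 3"
    "k * (2 * k + 1) - 2 + 2 = k * (2 * k + 1)"
    by simp_all
  have excess:
    "\<not> has_rainbow_cycle c (2 * k - 1 + 2)"
    "\<not> has_rainbow_cycle c (6 * k - 5 + 2)"
    "\<not> has_rainbow_cycle c (k * (2 * k + 1) - 2 + 2)"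
    unfolding lengths using assms(3-5) by simp_all
  obtain x y z
    where M: "M = x * (2 * k - 1) + y * (6 * k - 5) + z * (k * (2 * k + 1) - 2) + 2"
    using cycle_excess_decomposition[OF k assms(6)] by blast
  show ?thesis
    unfolding M by (intro no_rainbow_cycle_excess_add no_rainbow_cycle_excess_mult assms(1) excess)
qed

end
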